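(* Let $n\ge2$, $r'>1$, $C_H>0$, $\alpha^*=r/n$, and let $V\ge0$ satisfy: $V(x)\le C_2e^{\delta|x|}$ for $|x|$ large, $V$ is locally bounded, and $V$ has exactly $l\ge1$ zeros $P_1,\dots,P_l$ with $V(x)=a_i|x-P_i|^{q_i}+O(|x-P_i|^{q_i+1})$ for $0<|x-P_i|\le d$ ($a_i,q_i,d>0$). Let $(m_0,w_0)$ be a minimizer of $\Gamma_{\alpha^*}$ with $\int m_0=M^*$, $C_L\int|w_0/m_0|^rm_0\,dx=1=\frac n{n+r}\int m_0^{1+r/n}dx$, and $m_0(x)\le Ce^{-\delta_1|x|}$ for some $C,\delta_1>0$. Let $q=\max_iq_i$, $Z=\{P_i:q_i=q\}$, $H_i(y)=\int a_i|x+y|^{q_i}m_0(x)dx$, $\mu_i=\min_yH_i(y)$, $\mu=\min\{\mu_i:P_i\in Z\}$. Then as $M\nearrow M^*$, $$e_{\alpha^*,M}\le(1+o(1))\frac{q+r}{q}\Big(\frac{q\mu}{r}\Big)^{\frac r{r+q}}\Big[1-\Big(\frac M{M^*}\Big)^{\frac rn}\Big]^{\frac q{r+q}} .$$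
   Context: $r=r'/(r'-1)$, $C_L=\frac1r(r'C_H)^{1/(1-r')}$; $\hat q=\frac n{n-r+1}$ if $r<n$, a fixed number in $(\frac{2n}{n+2},n)$ if $r=n$, $r$ if $r>n$. The integrand $m|w/m|^r$ means $|w|^rm^{1-r}$ where $m>0$, $0$ where $(m,w)=(0,0)$, $+\infty$ where $m=0\ne w$. $\Gamma_{\alpha^*}$ is the infimum, over pairs $(m,w)\in(L^1\cap W^{1,\hat q})\times L^1$ with $\int\nabla m\cdot\nabla\varphi=\int w\cdot\nabla\varphi$ for all $\varphi\in C_c^\infty$, $\int|x|^bm<\infty$ (fixed $b>0$), $m\ge0$, $m\not\equiv0$, of $\frac{(C_L\int m|w/m|^r)(\int m)^{r/n}}{\int m^{1+r/n}}$; $M^*=[\Gamma_{\alpha^*}(1+\alpha^* )]^{1/\alpha^*}$. $\mathcal K_M$: pairs $(m,w)\in(L^1\cap W^{1,\hat q})\times L^1$ with $\Delta m=\nabla\cdot w$ weakly, $\int Vm<\infty$, $\int m=M$, $m\ge0$; $e_{\alpha^*,M}=\inf_{\mathcal K_M}\big[C_L\int|w/m|^rm+\int Vm-\frac n{n+r}\int m^{1+r/n}\big]$. *)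

theory Defs
  imports "HOL-Analysis.Analysis"
begin

definition pderiv_dir :: "('a::euclidean_space \<Rightarrow> real) \<Rightarrow> 'a \<Rightarrow> 'a \<Rightarrow> real" where
  "pderiv_dir f i x = frechet_derivative f (at x) i"

fun Ck_fun :: "nat \<Rightarrow> ('a::euclidean_space \<Rightarrow> real) \<Rightarrow> bool" where
  "Ck_fun 0 f = continuous_on UNIV f"
| "Ck_fun (Suc k) f = (continuous_on UNIV f \<and> (\<forall>x. f differentiable (at x))
      \<and> (\<forall>i\<in>Basis. Ck_fun k (pderiv_dir f i)))"

definition smooth_fun :: "('a::euclidean_space \<Rightarrow> real) \<Rightarrow> bool" where
  "smooth_fun f \<longleftrightarrow> (\<forall>k. Ck_fun k f)"

definition test_fun :: "('a::euclidean_space \<Rightarrow> real) \<Rightarrow> bool" where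
  "test_fun \<phi> \<longleftrightarrow> smooth_fun \<phi> \<and> compact (closure {x. \<phi> x \<noteq> 0})"

definition grad :: "('a::euclidean_space \<Rightarrow> real) \<Rightarrow> 'a \<Rightarrow> 'a" where
  "grad \<phi> x = (\<Sum>i\<in>Basis. pderiv_dir \<phi> i x *\<^sub>R i)"

definition Lp_fun :: "real \<Rightarrow> ('a::euclidean_space \<Rightarrow> real) \<Rightarrow> bool" where
  "Lp_fun p f \<longleftrightarrow> f \<in> borel_measurable lborel \<and> integrable lborel (\<lambda>x. \<bar>f x\<bar> powr p)"

definition Lp_field :: "real \<Rightarrow> ('a::euclidean_space \<Rightarrow> 'a) \<Rightarrow> bool" where
  "Lp_field p g \<longleftrightarrow> g \<in> borel_measurable lborel \<and> integrable lborel (\<lambda>x. norm (g x) powr p)"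

definition weak_grad :: "('a::euclidean_space \<Rightarrow> real) \<Rightarrow> ('a \<Rightarrow> 'a) \<Rightarrow> bool" where
  "weak_grad m g \<longleftrightarrow> (\<forall>\<phi>. test_fun \<phi> \<longrightarrow> (\<forall>i\<in>Basis.
      (\<integral>x. m x * pderiv_dir \<phi> i x \<partial>lborel) = - (\<integral>x. (g x \<bullet> i) * \<phi> x \<partial>lborel)))"

definition W1p :: "real \<Rightarrow> ('a::euclidean_space \<Rightarrow> real) \<Rightarrow> bool" where
  "W1p p m \<longleftrightarrow> Lp_fun p m \<and> (\<exists>g. weak_grad m g \<and> Lp_field p g)"

text \<open>Pairs (m,w) in (L^1 \<inter> W^{1,qhat}) \<times> L^1 with \<Delta>m = div w weakly, i.e.
  \<integral> \<nabla>m\<cdot>\<nabla>\<phi> = \<integral> w\<cdot>\<nabla>\<phi> for all test functions \<phi> (\<nabla>m the weak gradient).\<close>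
definition weak_pair :: "real \<Rightarrow> ('a::euclidean_space \<Rightarrow> real) \<Rightarrow> ('a \<Rightarrow> 'a) \<Rightarrow> bool" where
  "weak_pair qhat m w \<longleftrightarrow>
     Lp_fun 1 m \<and> integrable lborel m \<and> w \<in> borel_measurable lborel \<and> integrable lborel w \<and>
     (\<exists>g. weak_grad m g \<and> Lp_field qhat g \<and> Lp_fun qhat m \<and>
        (\<forall>\<phi>. test_fun \<phi> \<longrightarrow>
           (\<integral>x. g x \<bullet> grad \<phi> x \<partial>lborel) = (\<integral>x. w x \<bullet> grad \<phi> x \<partial>lborel)))"

definition conj_exp :: "real \<Rightarrow> real" where
  "conj_exp r' = r' / (r' - 1)"

definition C_L :: "real \<Rightarrow> real \<Rightarrow> real" where
  "C_L r' CH = (1 / conj_exp r') * (r' * CH) powr (1 / (1 - r'))"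

definition qhat_ok :: "nat \<Rightarrow> real \<Rightarrow> real \<Rightarrow> bool" where
  "qhat_ok n r qh \<longleftrightarrow>
     (r < real n \<longrightarrow> qh = real n / (real n - r + 1)) \<and>
     (r = real n \<longrightarrow> 2 * real n / (real n + 2) < qh \<and> qh < real n) \<and>
     (r > real n \<longrightarrow> qh = r)"

text \<open>Integrand m |w/m|^r with the stated conventions.\<close>
definition lag_dens :: "real \<Rightarrow> real \<Rightarrow> 'a::real_normed_vector \<Rightarrow> ennreal" where
  "lag_dens r mx wx = (if mx > 0 then ennreal (norm wx powr r * mx powr (1 - r))
                       else if wx = 0 then 0 else \<infinity>)"

definition kin :: "real \<Rightarrow> ('a::euclidean_space \<Rightarrow> real) \<Rightarrow> ('a \<Rightarrow> 'a) \<Rightarrow> ennreal" where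
  "kin r m w = (\<integral>\<^sup>+ x. lag_dens r (m x) (w x) \<partial>lborel)"

definition pot :: "real \<Rightarrow> ('a::euclidean_space \<Rightarrow> real) \<Rightarrow> ennreal" where
  "pot p m = (\<integral>\<^sup>+ x. ennreal (m x powr p) \<partial>lborel)"

definition Gamma_adm :: "real \<Rightarrow> real \<Rightarrow> (('a::euclidean_space \<Rightarrow> real) \<times> ('a \<Rightarrow> 'a)) set" where
  "Gamma_adm qhat b = {(m, w). weak_pair qhat m w \<and>
      (\<integral>\<^sup>+ x. ennreal (norm x powr b * m x) \<partial>lborel) < \<infinity> \<and>
      (\<forall>x. m x \<ge> 0) \<and> \<not> (AE x in lborel. m x = 0)}"

definition Gamma_fun :: "real \<Rightarrow> real \<Rightarrow> ('a::euclidean_space \<Rightarrow> real) \<Rightarrow> ('a \<Rightarrow> 'a) \<Rightarrow> ereal" where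
  "Gamma_fun r' CH m w =
     (let r = conj_exp r'; n = real DIM('a) in
      ereal (C_L r' CH) * enn2ereal (kin r m w) * ereal ((\<integral>x. m x \<partial>lborel) powr (r / n))
        / enn2ereal (pot (1 + r / n) m))"

definition Gamma_star :: "real \<Rightarrow> real \<Rightarrow> real \<Rightarrow> real \<Rightarrow> 'a::euclidean_space itself \<Rightarrow> ereal" where
  "Gamma_star r' CH qhat b _ = (INF mw \<in> (Gamma_adm qhat b :: (('a \<Rightarrow> real) \<times> ('a \<Rightarrow> 'a)) set).
      Gamma_fun r' CH (fst mw) (snd mw))"

definition M_star :: "real \<Rightarrow> real \<Rightarrow> real \<Rightarrow> real \<Rightarrow> 'a::euclidean_space itself \<Rightarrow> real" where
  "M_star r' CH qhat b T =
     (let \<alpha> = conj_exp r' / real DIM('a) in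
      (real_of_ereal (Gamma_star r' CH qhat b T) * (1 + \<alpha>)) powr (1 / \<alpha>))"

definition K_set :: "real \<Rightarrow> ('a::euclidean_space \<Rightarrow> real) \<Rightarrow> real \<Rightarrow> (('a \<Rightarrow> real) \<times> ('a \<Rightarrow> 'a)) set" where
  "K_set qhat V M = {(m, w). weak_pair qhat m w \<and>
      (\<integral>\<^sup>+ x. ennreal (V x * m x) \<partial>lborel) < \<infinity> \<and>
      (\<integral>x. m x \<partial>lborel) = M \<and> (\<forall>x. m x \<ge> 0)}"

definition energy :: "real \<Rightarrow> real \<Rightarrow> ('a::euclidean_space \<Rightarrow> real) \<Rightarrow> ('a \<Rightarrow> real) \<Rightarrow> ('a \<Rightarrow> 'a) \<Rightarrow> ereal" where
  "energy r' CH V m w =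
     (let r = conj_exp r'; n = real DIM('a) in
      ereal (C_L r' CH) * enn2ereal (kin r m w)
      + enn2ereal (\<integral>\<^sup>+ x. ennreal (V x * m x) \<partial>lborel)
      - ereal (n / (n + r)) * enn2ereal (pot (1 + r / n) m))"

definition e_ground :: "real \<Rightarrow> real \<Rightarrow> real \<Rightarrow> ('a::euclidean_space \<Rightarrow> real) \<Rightarrow> real \<Rightarrow> ereal" where
  "e_ground r' CH qhat V M = (INF mw \<in> K_set qhat V M. energy r' CH V (fst mw) (snd mw))"

end

theory Submission
  imports Defs "HOL-Probability.Distributions"
begin

text \<open>An upper bound needs only trial states.  Concentrate the minimiser \<open>m\<^sub>0\<close> of
  \<open>\<Gamma>\<^sub>\<alpha>\<^sub>*\<close>, with mass \<open>M = c M\<^sup>*\<close>, at scale \<open>1/\<tau>\<close> near a zero \<open>P\<close> of \<open>V\<close>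
  of maximal order \<open>q\<close>: \<open>m(x) = c \<tau>\<^sup>n m\<^sub>0(\<tau>(x - P) - y)\<close>.  The normalisations of \<open>m\<^sub>0\<close> give the
  energy \<open>c[(1 - c\<^sup>r\<^sup>/\<^sup>n) \<tau>\<^sup>r + \<integral> V(P + (z + y)/\<tau>) m\<^sub>0(z) dz]\<close>, and since \<open>V\<close> behaves like
  \<open>a|x - P|\<^sup>q\<close> near \<open>P\<close> while \<open>m\<^sub>0\<close> decays exponentially, dominated convergence gives
  \<open>\<tau>\<^sup>q \<integral> V(P + (z + y)/\<tau>) m\<^sub>0(z) dz \<rightarrow> H(y)\<close>.  Choosing \<open>y\<close> with \<open>H(y)\<close> close to \<open>\<mu>\<close> and
  optimising \<open>(1 - c\<^sup>r\<^sup>/\<^sup>n) \<tau>\<^sup>r + H(y) \<tau>\<^sup>-\<^sup>q\<close> in \<open>\<tau>\<close> gives the bound; the optimal \<open>\<tau>\<close> tends to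
  infinity as \<open>M \<nearrow> M\<^sup>*\<close>, which justifies the blow-up limit.\<close>

section \<open>Affine changes of variables on a Euclidean space\<close>

lemma nn_integral_affine:
  fixes f :: "'a::euclidean_space \<Rightarrow> ennreal" and c :: real
  assumes [measurable]: "f \<in> borel_measurable borel" and c: "c \<noteq> 0"
  shows "(\<integral>\<^sup>+x. f x \<partial>lborel) = ennreal (\<bar>c\<bar> ^ DIM('a)) * (\<integral>\<^sup>+x. f (t + c *\<^sub>R x) \<partial>lborel)"
  by (subst lborel_affine[OF c, of t]) (simp add: nn_integral_density nn_integral_distr nn_integral_cmult)

lemma nn_integral_affine_pos:
  fixes f :: "'a::euclidean_space \<Rightarrow> ennreal"
  assumes f: "f \<in> borel_measurable lborel" and c: "c > 0"
  shows "(\<integral>\<^sup>+x. f (t + c *\<^sub>R x) \<partial>lborel) = ennreal (1 / c ^ DIM('a)) * (\<integral>\<^sup>+x. f x \<partial>lborel)"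
proof -
  have "(\<integral>\<^sup>+x. f x \<partial>lborel) = ennreal (c ^ DIM('a)) * (\<integral>\<^sup>+x. f (t + c *\<^sub>R x) \<partial>lborel)"
    using nn_integral_affine[of f c t] f c by (simp add: measurable_lborel1)
  moreover have "ennreal (1 / c ^ DIM('a)) * ennreal (c ^ DIM('a)) = 1"
    using c by (simp add: ennreal_mult'[symmetric])
  ultimately show ?thesis by (simp add: mult.assoc[symmetric])
qed

lemma lborel_integrable_affine:
  fixes f :: "'a::euclidean_space \<Rightarrow> 'b::{banach, second_countable_topology}"
  assumes f: "integrable lborel f" and c: "c \<noteq> 0"
  shows "integrable lborel (\<lambda>x. f (t + c *\<^sub>R x))"
  using f f[THEN borel_measurable_integrable] c unfolding integrable_iff_bounded
  by (subst (asm) nn_integral_affine[where c=c and t=t]) (auto simp: ennreal_mult_less_top)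

lemma lborel_integrable_affine_iff:
  fixes f :: "'a::euclidean_space \<Rightarrow> 'b::{banach, second_countable_topology}"
  assumes c: "c \<noteq> 0"
  shows "integrable lborel (\<lambda>x. f (t + c *\<^sub>R x)) \<longleftrightarrow> integrable lborel f"
proof
  assume "integrable lborel (\<lambda>x. f (t + c *\<^sub>R x))"
  from lborel_integrable_affine[OF this, of "1/c" "- t /\<^sub>R c"] c show "integrable lborel f"
    by (simp add: algebra_simps)
qed (use lborel_integrable_affine c in auto)

lemma lborel_integral_affine:
  fixes f :: "'a::euclidean_space \<Rightarrow> 'b::{banach, second_countable_topology}" and c :: real
  assumes c: "c \<noteq> 0"
  shows "(\<integral>x. f x \<partial>lborel) = (\<bar>c\<bar> ^ DIM('a)) *\<^sub>R (\<integral>x. f (t + c *\<^sub>R x) \<partial>lborel)"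
proof cases
  assume f[measurable]: "integrable lborel f"
  then show ?thesis
    using c f[THEN borel_measurable_integrable] f[THEN lborel_integrable_affine, of c t]
    by (subst lborel_affine[OF c, of t]) (simp add: integral_density integral_distr)
next
  assume "\<not> integrable lborel f"
  with c show ?thesis by (simp add: lborel_integrable_affine_iff not_integrable_integral_eq)
qed

lemma lborel_integral_affine_pos:
  fixes f :: "'a::euclidean_space \<Rightarrow> 'b::{banach, second_countable_topology}"
  assumes "c > 0"
  shows "(\<integral>x. f (t + c *\<^sub>R x) \<partial>lborel) = (1 / c ^ DIM('a)) *\<^sub>R (\<integral>x. f x \<partial>lborel)"
  using lborel_integral_affine[of c f t] assms by simp

lemma measurable_affine_comp:
  fixes f :: "'a::euclidean_space \<Rightarrow> 'b::topological_space"
  assumes "f \<in> borel_measurable lborel"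
  shows "(\<lambda>x. f (t + c *\<^sub>R x)) \<in> borel_measurable lborel"
proof -
  have "(\<lambda>x::'a. t + c *\<^sub>R x) \<in> lborel \<rightarrow>\<^sub>M lborel"
    by (simp add: measurable_lborel1)
  from measurable_compose[OF this assms] show ?thesis by (simp add: o_def)
qed

lemma has_derivative_affine_comp:
  fixes f :: "'a::euclidean_space \<Rightarrow> real"
  assumes "f differentiable (at (t + c *\<^sub>R x))"
  shows "((\<lambda>x. a * f (t + c *\<^sub>R x)) has_derivative
           (\<lambda>h. a * frechet_derivative f (at (t + c *\<^sub>R x)) (c *\<^sub>R h))) (at x)"
proof -
  have "((\<lambda>x. t + c *\<^sub>R x) has_derivative (\<lambda>h. c *\<^sub>R h)) (at x)"
    by (auto intro!: derivative_eq_intros)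
  from has_derivative_compose[OF this frechet_derivative_works[THEN iffD1, OF assms]]
  show ?thesis by (auto intro!: derivative_eq_intros simp: o_def)
qed

lemma pderiv_dir_affine_comp:
  fixes f :: "'a::euclidean_space \<Rightarrow> real"
  assumes "f differentiable (at (t + c *\<^sub>R x))"
  shows "pderiv_dir (\<lambda>x. a * f (t + c *\<^sub>R x)) i x = a * c * pderiv_dir f i (t + c *\<^sub>R x)"
  using frechet_derivative_at[OF has_derivative_affine_comp[OF assms, of a], symmetric]
    linear_frechet_derivative[OF assms]
  by (simp add: pderiv_dir_def linear_scale)

lemma Ck_fun_affine_comp:
  fixes f :: "'a::euclidean_space \<Rightarrow> real"
  shows "Ck_fun k f \<Longrightarrow> Ck_fun k (\<lambda>x. a * f (t + c *\<^sub>R x))"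
proof (induction k arbitrary: f a)
  case 0
  then show ?case by (auto intro!: continuous_intros continuous_on_compose2[of UNIV f])
next
  case (Suc k)
  then have cont: "continuous_on UNIV f" and diff: "\<And>x. f differentiable (at x)"
    and pderivs: "\<And>i. i \<in> Basis \<Longrightarrow> Ck_fun k (pderiv_dir f i)" by auto
  have "pderiv_dir (\<lambda>x. a * f (t + c *\<^sub>R x)) i = (\<lambda>x. a * c * pderiv_dir f i (t + c *\<^sub>R x))" for i
    using pderiv_dir_affine_comp[OF diff] by blast
  moreover have "(\<lambda>x. a * f (t + c *\<^sub>R x)) differentiable (at x)" for x
    using has_derivative_affine_comp[of f t c x a] diff unfolding differentiable_def by blast
  ultimately show ?case
    using Suc.IH pderivs cont by (auto intro!: continuous_intros continuous_on_compose2[of UNIV f])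
qed

lemma test_fun_differentiable: "test_fun \<phi> \<Longrightarrow> \<phi> differentiable (at x)"
  unfolding test_fun_def smooth_fun_def using Ck_fun.simps(2)[of 0 \<phi>] by metis

lemma test_fun_affine_comp:
  fixes \<phi> :: "'a::euclidean_space \<Rightarrow> real"
  assumes \<phi>: "test_fun \<phi>" and c: "c \<noteq> 0"
  shows "test_fun (\<lambda>x. \<phi> (t + c *\<^sub>R x))"
proof -
  let ?g = "\<lambda>y::'a. (- (1/c) *\<^sub>R t) + (1/c) *\<^sub>R y"
  have supp: "{x. \<phi> (t + c *\<^sub>R x) \<noteq> 0} = ?g ` {y. \<phi> y \<noteq> 0}"
    using c by (force simp: algebra_simps intro: image_eqI[of _ _ "t + c *\<^sub>R _"])
  have K: "compact (?g ` closure {y. \<phi> y \<noteq> 0})"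
    using \<phi> unfolding test_fun_def by (intro compact_continuous_image continuous_intros) auto
  have "closure (?g ` {y. \<phi> y \<noteq> 0}) \<subseteq> ?g ` closure {y. \<phi> y \<noteq> 0}"
    by (intro closure_minimal image_mono closure_subset compact_imp_closed K)
  then have "compact (closure {x. \<phi> (t + c *\<^sub>R x) \<noteq> 0})"
    unfolding supp using K by (metis closed_closure compact_Int_closed inf.absorb_iff2)
  moreover have "Ck_fun k (\<lambda>x. \<phi> (t + c *\<^sub>R x))" for k
    using Ck_fun_affine_comp[of k \<phi> 1 t c] \<phi> by (simp add: test_fun_def smooth_fun_def)
  ultimately show ?thesis unfolding test_fun_def smooth_fun_def by blast
qed

lemma grad_affine_comp:
  fixes \<phi> :: "'a::euclidean_space \<Rightarrow> real"
  assumes "\<And>y. \<phi> differentiable (at y)"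
  shows "grad (\<lambda>x. \<phi> (t + c *\<^sub>R x)) x = c *\<^sub>R grad \<phi> (t + c *\<^sub>R x)"
  using pderiv_dir_affine_comp[of \<phi> t c x 1] assms unfolding grad_def
  by (simp add: scaleR_sum_right)

lemma test_fun_affine_preimage:
  fixes \<phi> :: "'a::euclidean_space \<Rightarrow> real"
  assumes \<phi>: "test_fun \<phi>" and c: "c > 0"
  obtains \<psi> where "test_fun \<psi>" "\<phi> = (\<lambda>x. \<psi> (t + c *\<^sub>R x))"
proof
  let ?\<psi> = "\<lambda>y. \<phi> ((- (1/c) *\<^sub>R t) + (1/c) *\<^sub>R y)"
  show "test_fun ?\<psi>" using test_fun_affine_comp[OF \<phi>, of "1/c" "- (1/c) *\<^sub>R t"] c by simp
  show "\<phi> = (\<lambda>x. ?\<psi> (t + c *\<^sub>R x))" using c by (auto simp: algebra_simps)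
qed

section \<open>Rescaled states\<close>

definition rescaled :: "real \<Rightarrow> real \<Rightarrow> 'a::real_vector \<Rightarrow> ('a \<Rightarrow> 'b::real_vector) \<Rightarrow> 'a \<Rightarrow> 'b" where
  "rescaled k \<tau> t f x = k *\<^sub>R f (t + \<tau> *\<^sub>R x)"

lemma measurable_rescaled:
  fixes f :: "'a::euclidean_space \<Rightarrow> 'b::{real_normed_vector, second_countable_topology}"
  assumes "f \<in> borel_measurable lborel"
  shows "rescaled k \<tau> t f \<in> borel_measurable lborel"
  unfolding rescaled_def[abs_def]
  by (rule borel_measurable_scaleR[OF borel_measurable_const measurable_affine_comp[OF assms]])

lemma integral_rescaled:
  fixes f :: "'a::euclidean_space \<Rightarrow> 'b::{banach, second_countable_topology}"
  assumes "\<tau> > 0"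
  shows "(\<integral>x. rescaled k \<tau> t f x \<partial>lborel) = (k / \<tau> ^ DIM('a)) *\<^sub>R (\<integral>x. f x \<partial>lborel)"
  using lborel_integral_affine_pos[OF assms, of f t] by (simp add: rescaled_def)

lemma integrable_rescaled:
  fixes f :: "'a::euclidean_space \<Rightarrow> 'b::{banach, second_countable_topology}"
  shows "integrable lborel f \<Longrightarrow> \<tau> > 0 \<Longrightarrow> integrable lborel (rescaled k \<tau> t f)"
  unfolding rescaled_def by (intro integrable_scaleR_right lborel_integrable_affine) auto

lemma Lp_fun_rescaled:
  fixes f :: "'a::euclidean_space \<Rightarrow> real"
  assumes "Lp_fun p f" and "\<tau> > 0"
  shows "Lp_fun p (rescaled k \<tau> t f)"
proof -
  have "integrable lborel (\<lambda>x. \<bar>k\<bar> powr p * \<bar>f (t + \<tau> *\<^sub>R x)\<bar> powr p)"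
    using assms lborel_integrable_affine[of "\<lambda>x. \<bar>f x\<bar> powr p" \<tau> t]
    by (intro integrable_mult_right) (auto simp: Lp_fun_def)
  then show ?thesis
    using assms measurable_rescaled[of f]
    by (simp add: Lp_fun_def rescaled_def abs_mult powr_mult)
qed

lemma Lp_field_rescaled:
  fixes g :: "'a::euclidean_space \<Rightarrow> 'a"
  assumes "Lp_field p g" and "\<tau> > 0"
  shows "Lp_field p (rescaled k \<tau> t g)"
proof -
  have "integrable lborel (\<lambda>x. \<bar>k\<bar> powr p * norm (g (t + \<tau> *\<^sub>R x)) powr p)"
    using assms lborel_integrable_affine[of "\<lambda>x. norm (g x) powr p" \<tau> t]
    by (intro integrable_mult_right) (auto simp: Lp_field_def)
  then show ?thesis
    using assms measurable_rescaled[of g]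
    by (simp add: Lp_field_def rescaled_def powr_mult)
qed

text \<open>A test function \<open>\<phi> = \<psi>(t + \<tau>\<cdot>)\<close> has \<open>\<partial>\<^sub>i\<phi> = \<tau> (\<partial>\<^sub>i\<psi>)(t + \<tau>\<cdot>)\<close>, so both sides of
  the weak formulations pick up the same power of \<open>\<tau>\<close>.\<close>

lemma weak_grad_rescaled:
  fixes m :: "'a::euclidean_space \<Rightarrow> real"
  assumes wg: "weak_grad m g" and \<tau>: "\<tau> > 0"
  shows "weak_grad (rescaled k \<tau> t m) (rescaled (k * \<tau>) \<tau> t g)"
  unfolding weak_grad_def
proof (intro allI impI ballI)
  fix \<phi> :: "'a \<Rightarrow> real" and i :: 'a
  assume \<phi>: "test_fun \<phi>" and i: "i \<in> Basis"
  obtain \<psi> where \<psi>: "test_fun \<psi>" and \<phi>_eq: "\<phi> = (\<lambda>x. \<psi> (t + \<tau> *\<^sub>R x))"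
    using test_fun_affine_preimage[OF \<phi> \<tau>] .
  have pd: "pderiv_dir \<phi> i x = \<tau> * pderiv_dir \<psi> i (t + \<tau> *\<^sub>R x)" for x
    using pderiv_dir_affine_comp[of \<psi> t \<tau> x 1 i] test_fun_differentiable[OF \<psi>] by (simp add: \<phi>_eq)
  have "(\<integral>x. rescaled k \<tau> t m x * pderiv_dir \<phi> i x \<partial>lborel)
      = (\<integral>x. rescaled (k * \<tau>) \<tau> t (\<lambda>y. m y * pderiv_dir \<psi> i y) x \<partial>lborel)"
    by (simp add: pd rescaled_def mult_ac)
  also have "\<dots> = - (\<integral>x. rescaled (k * \<tau>) \<tau> t (\<lambda>y. (g y \<bullet> i) * \<psi> y) x \<partial>lborel)"
    using wg \<psi> i \<tau> by (simp add: integral_rescaled weak_grad_def)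
  also have "\<dots> = - (\<integral>x. (rescaled (k * \<tau>) \<tau> t g x \<bullet> i) * \<phi> x \<partial>lborel)"
    by (simp add: \<phi>_eq rescaled_def mult.assoc)
  finally show "(\<integral>x. rescaled k \<tau> t m x * pderiv_dir \<phi> i x \<partial>lborel)
      = - (\<integral>x. (rescaled (k * \<tau>) \<tau> t g x \<bullet> i) * \<phi> x \<partial>lborel)" .
qed

lemma weak_pair_rescaled:
  fixes m :: "'a::euclidean_space \<Rightarrow> real"
  assumes wp: "weak_pair qh m w" and \<tau>: "\<tau> > 0"
  shows "weak_pair qh (rescaled k \<tau> t m) (rescaled (k * \<tau>) \<tau> t w)"
proof -
  from wp obtain g where m: "Lp_fun 1 m" "integrable lborel m" "Lp_fun qh m"
    and w: "integrable lborel w" "w \<in> borel_measurable lborel"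
    and g: "weak_grad m g" "Lp_field qh g"
    and eq: "\<And>\<phi>. test_fun \<phi> \<Longrightarrow> (\<integral>x. g x \<bullet> grad \<phi> x \<partial>lborel) = (\<integral>x. w x \<bullet> grad \<phi> x \<partial>lborel)"
    unfolding weak_pair_def by blast
  have "(\<integral>x. rescaled (k * \<tau>) \<tau> t g x \<bullet> grad \<phi> x \<partial>lborel)
      = (\<integral>x. rescaled (k * \<tau>) \<tau> t w x \<bullet> grad \<phi> x \<partial>lborel)" if \<phi>: "test_fun \<phi>" for \<phi>
  proof -
    obtain \<psi> where \<psi>: "test_fun \<psi>" and \<phi>_eq: "\<phi> = (\<lambda>x. \<psi> (t + \<tau> *\<^sub>R x))"
      using test_fun_affine_preimage[OF \<phi> \<tau>] .
    have "(\<integral>x. rescaled (k * \<tau>) \<tau> t h x \<bullet> grad \<phi> x \<partial>lborel)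
        = (k * \<tau> * \<tau> / \<tau> ^ DIM('a)) * (\<integral>y. h y \<bullet> grad \<psi> y \<partial>lborel)" for h :: "'a \<Rightarrow> 'a"
      using grad_affine_comp[of \<psi> t \<tau>] test_fun_differentiable[OF \<psi>]
        integral_rescaled[OF \<tau>, of "k * \<tau> * \<tau>" t "\<lambda>y. h y \<bullet> grad \<psi> y"]
      by (simp add: \<phi>_eq rescaled_def mult_ac)
    then show ?thesis using eq[OF \<psi>] by simp
  qed
  then show ?thesis
    using m w g \<tau> measurable_rescaled[OF w(2), of "k * \<tau>" \<tau> t] unfolding weak_pair_def
    by (auto intro!: Lp_fun_rescaled Lp_field_rescaled weak_grad_rescaled integrable_rescaled
        measurable_rescaled)
qed

lemma lag_dens_rescaled:
  assumes k: "k > 0" and \<tau>: "\<tau> > 0"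
  shows "lag_dens r (k * u) ((k * \<tau>) *\<^sub>R v) = ennreal (k * \<tau> powr r) * lag_dens r u v"
proof (cases "u > 0")
  case True
  have "norm ((k * \<tau>) *\<^sub>R v) powr r * (k * u) powr (1 - r)
      = (k * \<tau> powr r) * (norm v powr r * u powr (1 - r))"
    using k \<tau> True by (simp add: powr_mult powr_diff field_simps)
  then show ?thesis using True k \<tau> by (simp add: lag_dens_def ennreal_mult'[symmetric])
next
  case False
  then show ?thesis using k \<tau> by (simp add: lag_dens_def zero_less_mult_iff ennreal_mult_top)
qed

lemma kin_rescaled:
  fixes m :: "'a::euclidean_space \<Rightarrow> real"
  assumes "m \<in> borel_measurable lborel" "w \<in> borel_measurable lborel" and k: "k > 0" and \<tau>: "\<tau> > 0"
  shows "kin r (rescaled k \<tau> t m) (rescaled (k * \<tau>) \<tau> t w)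
    = ennreal (k * \<tau> powr r / \<tau> ^ DIM('a)) * kin r m w"
proof -
  have meas: "(\<lambda>x. lag_dens r (m x) (w x)) \<in> borel_measurable lborel"
    unfolding lag_dens_def using assms by measurable
  have "kin r (rescaled k \<tau> t m) (rescaled (k * \<tau>) \<tau> t w)
      = (\<integral>\<^sup>+x. ennreal (k * \<tau> powr r) * lag_dens r (m (t + \<tau> *\<^sub>R x)) (w (t + \<tau> *\<^sub>R x)) \<partial>lborel)"
    unfolding kin_def rescaled_def real_scaleR_def by (intro nn_integral_cong lag_dens_rescaled[OF k \<tau>])
  also have "\<dots> = ennreal (k * \<tau> powr r) * (ennreal (1 / \<tau> ^ DIM('a)) * kin r m w)"
    using measurable_affine_comp[OF meas]
    by (simp add: nn_integral_cmult nn_integral_affine_pos[OF meas \<tau>] kin_def)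
  finally show ?thesis
    using k \<tau> by (simp add: ennreal_mult[symmetric] mult.assoc[symmetric])
qed

lemma pot_rescaled:
  fixes m :: "'a::euclidean_space \<Rightarrow> real"
  assumes "m \<in> borel_measurable lborel" and m_nonneg: "\<And>x. 0 \<le> m x" and k: "k > 0" and \<tau>: "\<tau> > 0"
  shows "pot p (rescaled k \<tau> t m) = ennreal (k powr p / \<tau> ^ DIM('a)) * pot p m"
proof -
  have meas: "(\<lambda>x. ennreal (m x powr p)) \<in> borel_measurable lborel"
    using assms by measurable
  have "pot p (rescaled k \<tau> t m) = (\<integral>\<^sup>+x. ennreal (k powr p) * ennreal (m (t + \<tau> *\<^sub>R x) powr p) \<partial>lborel)"
    unfolding pot_def rescaled_def using k m_nonneg by (simp add: powr_mult ennreal_mult')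
  also have "\<dots> = ennreal (k powr p) * (ennreal (1 / \<tau> ^ DIM('a)) * pot p m)"
    using measurable_affine_comp[OF meas]
    by (simp add: nn_integral_cmult nn_integral_affine_pos[OF meas \<tau>] pot_def)
  finally show ?thesis
    using k \<tau> by (simp add: ennreal_mult[symmetric] mult.assoc[symmetric])
qed

lemma nn_integral_weight_rescaled:
  fixes m V :: "'a::euclidean_space \<Rightarrow> real"
  assumes "m \<in> borel_measurable lborel" "V \<in> borel_measurable lborel" and k: "k > 0" and \<tau>: "\<tau> > 0"
  shows "(\<integral>\<^sup>+x. ennreal (V x * rescaled k \<tau> t m x) \<partial>lborel)
    = ennreal (k / \<tau> ^ DIM('a)) * (\<integral>\<^sup>+z. ennreal (V ((1/\<tau>) *\<^sub>R (z - t)) * m z) \<partial>lborel)"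
proof -
  define F where "F z = ennreal (V ((1/\<tau>) *\<^sub>R (z - t)) * m z)" for z
  have "(\<lambda>z. V ((1/\<tau>) *\<^sub>R (z - t))) = (\<lambda>z. V ((- (1/\<tau>) *\<^sub>R t) + (1/\<tau>) *\<^sub>R z))"
    by (simp add: algebra_simps)
  then have meas: "F \<in> borel_measurable lborel"
    unfolding F_def using assms measurable_affine_comp[of V] by measurable
  have "(\<integral>\<^sup>+x. ennreal (V x * rescaled k \<tau> t m x) \<partial>lborel) = (\<integral>\<^sup>+x. ennreal k * F (t + \<tau> *\<^sub>R x) \<partial>lborel)"
    unfolding F_def rescaled_def using \<tau> k by (simp add: ennreal_mult'[symmetric] mult_ac)
  also have "\<dots> = ennreal k * (ennreal (1 / \<tau> ^ DIM('a)) * (\<integral>\<^sup>+z. F z \<partial>lborel))"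
    using measurable_affine_comp[OF meas] by (simp add: nn_integral_cmult nn_integral_affine_pos[OF meas \<tau>])
  finally show ?thesis
    unfolding F_def using k \<tau> by (simp add: ennreal_mult[symmetric] mult.assoc[symmetric])
qed

lemma ereal_mult_enn2ereal_scale:
  assumes "ereal a * enn2ereal X = 1" "0 \<le> x"
  shows "ereal a * enn2ereal (ennreal x * X) = ereal x"
proof -
  have "ereal a * enn2ereal (ennreal x * X) = ereal x * (ereal a * enn2ereal X)"
    using assms(2) by (simp add: times_ennreal.rep_eq enn2ereal_ennreal mult_ac)
  then show ?thesis using assms(1) by simp
qed

lemma powr_interaction_scaling:
  fixes c \<tau> r :: real and n :: nat
  assumes c: "c > 0" and \<tau>: "\<tau> > 0" and n: "n > 0"
  shows "(c * \<tau> ^ n) powr (1 + r / n) / \<tau> ^ n = c powr (1 + r / n) * \<tau> powr r"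
proof -
  have "real n * (1 + r / n) = n + r"
    using n by (simp add: field_simps)
  then have "(\<tau> powr n) powr (1 + r / n) = \<tau> powr (n + r)"
    by (simp add: powr_powr)
  then have "(c * \<tau> ^ n) powr (1 + r / n) = c powr (1 + r / n) * (\<tau> ^ n * \<tau> powr r)"
    using c \<tau> by (simp add: powr_mult powr_realpow powr_add)
  then show ?thesis using \<tau> by simp
qed

text \<open>The trial state \<open>c \<tau>\<^sup>n m\<^sub>0(t + \<tau> x)\<close>: under the normalisations of \<open>m\<^sub>0\<close> its kinetic and
  interaction energies are \<open>c \<tau>\<^sup>r\<close> and \<open>c\<^sup>1\<^sup>+\<^sup>r\<^sup>/\<^sup>n \<tau>\<^sup>r\<close>.\<close>

lemma e_ground_le_trial_state:
  fixes m0 V :: "'a::euclidean_space \<Rightarrow> real" and w0 :: "'a \<Rightarrow> 'a" and r' r :: real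
  defines "r \<equiv> conj_exp r'"
  assumes wp: "weak_pair qhat m0 w0" and m0_nonneg: "\<And>x. 0 \<le> m0 x"
    and V_meas: "V \<in> borel_measurable lborel" and V_nonneg: "\<And>x. 0 \<le> V x"
    and kinetic: "ereal (C_L r' CH) * enn2ereal (kin r m0 w0) = 1"
    and interaction: "ereal (real DIM('a) / (real DIM('a) + r))
      * enn2ereal (pot (1 + r / real DIM('a)) m0) = 1"
    and c: "c > 0" and \<tau>: "\<tau> > 0"
    and V_int: "integrable lborel (\<lambda>z. V ((1/\<tau>) *\<^sub>R (z - t)) * m0 z)"
  shows "e_ground r' CH qhat V (c * (\<integral>x. m0 x \<partial>lborel))
    \<le> ereal (c * ((1 - c powr (r / real DIM('a))) * \<tau> powr r + (\<integral>z. V ((1/\<tau>) *\<^sub>R (z - t)) * m0 z \<partial>lborel)))"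
proof -
  define k where "k = c * \<tau> ^ DIM('a)"
  define m where "m = rescaled k \<tau> t m0"
  define w where "w = rescaled (k * \<tau>) \<tau> t w0"
  define I where "I = (\<integral>z. V ((1/\<tau>) *\<^sub>R (z - t)) * m0 z \<partial>lborel)"
  have k: "k > 0" and k_div: "k / \<tau> ^ DIM('a) = c"
    using c \<tau> by (auto simp: k_def)
  have meas: "m0 \<in> borel_measurable lborel" "w0 \<in> borel_measurable lborel"
    using wp by (auto simp: weak_pair_def Lp_fun_def)
  have I_nonneg: "0 \<le> I"
    unfolding I_def using V_nonneg m0_nonneg by (simp add: integral_nonneg)
  have V_m: "(\<integral>\<^sup>+x. ennreal (V x * m x) \<partial>lborel) = ennreal (c * I)"
    using nn_integral_weight_rescaled[OF meas(1) V_meas k \<tau>, of t]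
      nn_integral_eq_integral[OF V_int] V_nonneg m0_nonneg c I_nonneg
    by (simp add: m_def k_div I_def ennreal_mult)
  have "(\<integral>x. m x \<partial>lborel) = c * (\<integral>x. m0 x \<partial>lborel)"
    using integral_rescaled[OF \<tau>, of k t m0] by (simp add: m_def k_div)
  then have "(m, w) \<in> K_set qhat V (c * (\<integral>x. m0 x \<partial>lborel))"
    using weak_pair_rescaled[OF wp \<tau>] V_m k m0_nonneg
    by (simp add: K_set_def m_def w_def) (simp add: rescaled_def)
  then have "e_ground r' CH qhat V (c * (\<integral>x. m0 x \<partial>lborel)) \<le> energy r' CH V m w"
    unfolding e_ground_def by (rule INF_lower2) simp
  also have "energy r' CH V m w = ereal (c * \<tau> powr r) + ereal (c * I)
      - ereal (c powr (1 + r / real DIM('a)) * \<tau> powr r)"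
  proof -
    have "kin r m w = ennreal (c * \<tau> powr r) * kin r m0 w0"
      using kin_rescaled[OF meas k \<tau>, of r t] \<tau> by (simp add: m_def w_def k_def)
    moreover have "pot (1 + r / real DIM('a)) m
        = ennreal (c powr (1 + r / real DIM('a)) * \<tau> powr r) * pot (1 + r / real DIM('a)) m0"
      using pot_rescaled[OF meas(1) m0_nonneg k \<tau>] powr_interaction_scaling[OF c \<tau>, of "DIM('a)" r]
      by (simp add: m_def k_def)
    ultimately show ?thesis
      using kinetic interaction V_m c \<tau> I_nonneg
      by (simp add: energy_def Let_def r_def[symmetric] ereal_mult_enn2ereal_scale enn2ereal_ennreal)
  qed
  also have "\<dots> = ereal (c * ((1 - c powr (r / real DIM('a))) * \<tau> powr r + I))"
    using c by (simp add: powr_add algebra_simps)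
  finally show ?thesis unfolding I_def .
qed

section \<open>Exponential weights\<close>

lemma nn_integral_exp_minus_abs_finite:
  assumes \<beta>: "\<beta> > 0"
  shows "(\<integral>\<^sup>+x. ennreal (exp (- \<beta> * \<bar>x::real\<bar>)) \<partial>lborel) < \<infinity>"
proof -
  define f where "f x = ennreal (exp (- x)) * indicator {0..} x" for x :: real
  have f_meas[measurable]: "f \<in> borel_measurable borel" unfolding f_def by measurable
  have f1: "(\<integral>\<^sup>+x. f x \<partial>lborel) = 1"
    using nn_intergal_power_times_exp_Ici[of 0] unfolding f_def by simp
  have finite: "(\<integral>\<^sup>+x. f (c * x) \<partial>lborel) < \<infinity>" if "c \<noteq> 0" for c
    using nn_integral_real_affine[OF f_meas that, of 0] f1 that
    by (cases "(\<integral>\<^sup>+x. f (c * x) \<partial>lborel) = \<infinity>") (auto simp: less_top ennreal_mult_top)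
  have "ennreal (exp (- \<beta> * \<bar>x\<bar>)) \<le> f (\<beta> * x) + f (- \<beta> * x)" for x
    using \<beta> by (cases "x \<ge> 0") (auto simp: f_def indicator_def zero_le_mult_iff mult_le_0_iff)
  then have "(\<integral>\<^sup>+x. ennreal (exp (- \<beta> * \<bar>x\<bar>)) \<partial>lborel)
      \<le> (\<integral>\<^sup>+x. f (\<beta> * x) \<partial>lborel) + (\<integral>\<^sup>+x. f (- \<beta> * x) \<partial>lborel)"
    by (subst nn_integral_add[symmetric]) (auto intro: nn_integral_mono)
  also have "\<dots> < \<infinity>" using finite[of \<beta>] finite[of "- \<beta>"] \<beta> by (simp add: ennreal_add_less_top)
  finally show ?thesis .
qed

lemma integrable_exp_minus_norm:
  assumes \<gamma>: "\<gamma> > 0"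
  shows "integrable lborel (\<lambda>x::'a::euclidean_space. exp (- \<gamma> * norm x))"
proof -
  define \<beta> where "\<beta> = \<gamma> / DIM('a)"
  have \<beta>: "\<beta> > 0" using \<gamma> by (simp add: \<beta>_def)
  have le: "ennreal (exp (- \<gamma> * norm x)) \<le> (\<Prod>b\<in>Basis. ennreal (exp (- \<beta> * \<bar>x \<bullet> b\<bar>)))" for x :: 'a
  proof -
    have "(\<Sum>b\<in>Basis. \<bar>x \<bullet> b\<bar>) \<le> (\<Sum>b\<in>(Basis::'a set). norm x)"
      by (intro sum_mono) (simp add: Basis_le_norm)
    then have "\<beta> * (\<Sum>b\<in>Basis. \<bar>x \<bullet> b\<bar>) \<le> \<gamma> * norm x"
      using \<gamma> by (simp add: \<beta>_def field_simps)
    then have "exp (- \<gamma> * norm x) \<le> (\<Prod>b\<in>Basis. exp (- \<beta> * \<bar>x \<bullet> b\<bar>))"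
      by (simp add: sum_distrib_left exp_sum[symmetric] sum_negf)
    then show ?thesis by (subst prod_ennreal) (auto intro: ennreal_leI)
  qed
  have "(\<integral>\<^sup>+x. ennreal (exp (- \<gamma> * norm (x::'a))) \<partial>lborel)
      \<le> (\<integral>\<^sup>+x. (\<Prod>b\<in>Basis. ennreal (exp (- \<beta> * \<bar>(x::'a) \<bullet> b\<bar>))) \<partial>lborel)"
    by (intro nn_integral_mono le)
  also have "\<dots> = (\<Prod>b\<in>(Basis::'a set). (\<integral>\<^sup>+x. ennreal (exp (- \<beta> * \<bar>x\<bar>)) \<partial>lborel))"
    by (rule nn_integral_lborel_prod) auto
  also have "\<dots> < \<infinity>"
    using nn_integral_exp_minus_abs_finite[OF \<beta>] by (simp add: less_top[symmetric] power_eq_top_ennreal)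
  finally show ?thesis
    by (intro integrableI_nonneg) (auto simp: measurable_lborel1)
qed

lemma powr_le_exp_bound:
  fixes s \<beta> :: real
  assumes s: "s \<ge> 0" and \<beta>: "\<beta> > 0"
  shows "\<exists>K>0. \<forall>u\<ge>0. u powr s \<le> K * exp (\<beta> * u)"
proof (cases "s = 0")
  case True
  then show ?thesis using \<beta> by (auto intro!: exI[of _ 1])
next
  case False
  then have s: "s > 0" using s by simp
  define e where "e = \<beta> / s"
  have e: "e > 0" unfolding e_def using s \<beta> by simp
  have "u powr s \<le> exp (s * (- 1 - ln e)) * exp (\<beta> * u)" if u: "u > 0" for u
  proof -
    have "s * ln u = s * (ln (e * u) - ln e)" using u e by (simp add: ln_mult)
    also have "\<dots> \<le> s * (e * u - 1 - ln e)"
      using ln_le_minus_one[of "e * u"] u e s by (intro mult_left_mono) auto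
    also have "\<dots> = \<beta> * u + s * (- 1 - ln e)" using s by (simp add: e_def field_simps)
    finally show ?thesis using u by (simp add: powr_def exp_add[symmetric] mult.commute)
  qed
  then have "u powr s \<le> exp (s * (- 1 - ln e)) * exp (\<beta> * u)" if "u \<ge> 0" for u
    using that by (cases "u = 0") auto
  then show ?thesis by (intro exI[of _ "exp (s * (- 1 - ln e))"]) auto
qed

lemma exp_bound_of_locally_bounded:
  fixes V :: "'a::euclidean_space \<Rightarrow> real"
  assumes locbdd: "\<forall>K. compact K \<longrightarrow> bounded (V ` K)"
    and growth: "\<forall>x. norm x \<ge> R \<longrightarrow> V x \<le> C * exp (\<delta> * norm x)"
    and C: "C \<ge> 0" and \<delta>: "\<delta> \<ge> 0"
  shows "\<exists>C' \<delta>'. \<forall>x. V x \<le> C' * exp (\<delta>' * norm x)"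
proof -
  obtain B where B: "\<forall>x\<in>cball 0 R. norm (V x) \<le> B"
    using locbdd[rule_format, of "cball 0 R"] unfolding bounded_iff by auto
  have "V x \<le> (\<bar>B\<bar> + C) * exp (\<delta> * norm x)" for x
  proof (cases "norm x \<le> R")
    case True
    then have "\<bar>V x\<bar> \<le> B" using B by simp
    then have "V x \<le> \<bar>B\<bar> * 1" by linarith
    also have "\<dots> \<le> (\<bar>B\<bar> + C) * exp (\<delta> * norm x)"
      using C \<delta> by (intro mult_mono) auto
    finally show ?thesis .
  next
    case False
    then have "V x \<le> C * exp (\<delta> * norm x)" using growth by auto
    also have "\<dots> \<le> (\<bar>B\<bar> + C) * exp (\<delta> * norm x)" by (intro mult_right_mono) auto
    finally show ?thesis .
  qed
  then show ?thesis by blast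
qed

lemma integral_cube_le:
  fixes f :: "'a::euclidean_space \<Rightarrow> real"
  assumes f: "integrable lborel f" and bound: "\<And>x. f x \<le> B" and \<rho>: "0 \<le> \<rho>"
  shows "(\<integral>x. indicator (cbox (c - \<rho> *\<^sub>R One) (c + \<rho> *\<^sub>R One)) x *\<^sub>R f x \<partial>lborel)
    \<le> B * (2 * \<rho>) ^ DIM('a)"
proof -
  define Q where "Q = cbox (c - \<rho> *\<^sub>R One) (c + \<rho> *\<^sub>R One)"
  have Q_meas: "Q \<in> sets lborel" by (simp add: Q_def)
  have Q_fin: "emeasure lborel Q < \<infinity>" unfolding Q_def by (rule emeasure_lborel_cbox_finite)
  have "integrable lborel (\<lambda>x. indicator Q x *\<^sub>R B)"
    using integrable_real_indicator[OF Q_meas Q_fin] by simp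
  then have "(\<integral>x. indicator Q x *\<^sub>R f x \<partial>lborel) \<le> (\<integral>x. indicator Q x *\<^sub>R B \<partial>lborel)"
    using integrable_mult_indicator[OF Q_meas f] bound
    by (intro integral_mono) (auto simp: indicator_def)
  also have "\<dots> = B * measure lborel Q"
    by (simp add: mult.commute)
  also have "measure lborel Q = (2 * \<rho>) ^ DIM('a)"
    using \<rho> unfolding Q_def measure_lborel_cbox_eq
    by (auto simp: inner_diff_left inner_add_left intro!: prod.cong)
  finally show ?thesis by (simp add: Q_def)
qed

text \<open>A mass \<open>M\<close> with density at most \<open>B\<close> cannot concentrate near any point: a cube of volume
  at most \<open>M/2B\<close> around \<open>-y\<close> carries at most half of it, and the rest lies outside the cube.\<close>

lemma moment_bounded_below:
  fixes m0 :: "'a::euclidean_space \<Rightarrow> real"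
  assumes m0_nonneg: "\<And>x. 0 \<le> m0 x" and m0_int: "integrable lborel m0"
    and mass: "(\<integral>x. m0 x \<partial>lborel) > 0" and bounded: "\<And>x. m0 x \<le> B"
    and a0: "a0 > 0" and q: "q > 0"
    and moment_int: "\<And>y. integrable lborel (\<lambda>x. a0 * norm (x + y) powr q * m0 x)"
  shows "\<exists>c>0. \<forall>y. c \<le> (\<integral>x. a0 * norm (x + y) powr q * m0 x \<partial>lborel)"
proof -
  define M where "M = (\<integral>x. m0 x \<partial>lborel)"
  have B: "B \<ge> 0" using bounded m0_nonneg by (meson order.trans)
  define h where "h = min 1 (M / (2 * (B + 1)))"
  have h: "0 < h" "h \<le> 1" using mass B by (auto simp: h_def M_def)
  have small_box: "B * h ^ DIM('a) \<le> M / 2"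
  proof -
    have "B * h ^ DIM('a) \<le> (B + 1) * h"
      using h B by (intro mult_mono) (auto simp: power_le_one power_decreasing[of 1 _ h, simplified])
    also have "\<dots> \<le> (B + 1) * (M / (2 * (B + 1)))"
      using B by (intro mult_left_mono) (auto simp: h_def)
    also have "\<dots> = M / 2"
      using B by (simp add: field_simps)
    finally show ?thesis .
  qed
  define \<rho> where "\<rho> = h / 2"
  have \<rho>: "\<rho> > 0" using h by (simp add: \<rho>_def)
  have "a0 * \<rho> powr q * (M / 2) \<le> (\<integral>x. a0 * norm (x + y) powr q * m0 x \<partial>lborel)" for y
  proof -
    define Q where "Q = cbox (- y - \<rho> *\<^sub>R One) (- y + \<rho> *\<^sub>R One)"
    have int_Q: "integrable lborel (\<lambda>x. indicator Q x *\<^sub>R m0 x)"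
      unfolding Q_def by (rule integrable_mult_indicator[OF _ m0_int]) simp
    have mass_Q: "(\<integral>x. indicator Q x *\<^sub>R m0 x \<partial>lborel) \<le> M / 2"
      using integral_cube_le[OF m0_int bounded, of \<rho> "- y"] \<rho> small_box
      by (simp add: Q_def \<rho>_def)
    have pointwise: "a0 * \<rho> powr q * (m0 x - indicator Q x *\<^sub>R m0 x) \<le> a0 * norm (x + y) powr q * m0 x" for x
    proof (cases "x \<in> Q")
      case True then show ?thesis using m0_nonneg a0 by simp
    next
      case False
      then obtain b where b: "b \<in> Basis" "\<rho> < \<bar>(x + y) \<bullet> b\<bar>"
        unfolding Q_def mem_box by (auto simp: not_le inner_diff_left inner_add_left)
      then have "\<rho> < norm (x + y)" using Basis_le_norm[OF b(1), of "x + y"] by linarith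
      then have "\<rho> powr q \<le> norm (x + y) powr q" using \<rho> q by (intro powr_mono2) auto
      then show ?thesis using False m0_nonneg a0 by (simp add: mult_right_mono)
    qed
    have "a0 * \<rho> powr q * (M / 2) \<le> a0 * \<rho> powr q * (M - (\<integral>x. indicator Q x *\<^sub>R m0 x \<partial>lborel))"
      using mass_Q a0 \<rho> by (intro mult_left_mono) auto
    also have "\<dots> = (\<integral>x. a0 * \<rho> powr q * (m0 x - indicator Q x *\<^sub>R m0 x) \<partial>lborel)"
      using int_Q m0_int by (simp add: M_def)
    also have "\<dots> \<le> (\<integral>x. a0 * norm (x + y) powr q * m0 x \<partial>lborel)"
      using int_Q m0_int moment_int pointwise by (intro integral_mono) auto
    finally show ?thesis .
  qed
  moreover have "a0 * \<rho> powr q * (M / 2) > 0" using a0 \<rho> mass by (simp add: M_def)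
  ultimately show ?thesis by blast
qed

text \<open>The value of \<open>s \<tau>\<^sup>r + A \<tau>\<^sup>-\<^sup>q\<close> at its minimiser \<open>\<tau> = (q A / (r s))\<^sup>1\<^sup>/\<^sup>(\<^sup>r\<^sup>+\<^sup>q\<^sup>)\<close>.\<close>

lemma power_sum_at_optimal_scale:
  fixes A s q r :: real
  assumes A: "A > 0" and s: "s > 0" and q: "q > 0" and r: "r > 0"
  defines "\<tau> \<equiv> (q * A / (r * s)) powr (1 / (r + q))"
  shows "s * \<tau> powr r + A * \<tau> powr (- q)
    = ((q + r) / q) * (q * A / r) powr (r / (r + q)) * s powr (q / (r + q))"
proof -
  define W a b where "W = q * A / r" and "a = r / (r + q)" and "b = q / (r + q)"
  have W: "W > 0" using A q r by (simp add: W_def)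
  have split: "x powr a * x powr b = x" if "x > 0" for x
  proof -
    have "a + b = 1" using q r by (simp add: a_def b_def add_divide_distrib[symmetric])
    then show ?thesis using that by (simp add: powr_add[symmetric])
  qed
  have "\<tau> = (W / s) powr (1 / (r + q))" by (simp add: \<tau>_def W_def)
  then have "\<tau> powr r = W powr a / s powr a" and "\<tau> powr (- q) = s powr b / W powr b"
    using W s q r by (simp_all add: a_def b_def powr_powr powr_divide powr_minus_divide)
  moreover have "A = (r / q) * W" using q r by (simp add: W_def)
  ultimately have "s * \<tau> powr r + A * \<tau> powr (- q)
      = W powr a * (s / s powr a) + (r / q) * s powr b * (W / W powr b)"
    by (simp add: field_simps)
  also have "\<dots> = ((q + r) / q) * W powr a * s powr b"
    using split[OF s] split[OF W] W s q by (simp add: field_simps)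
  finally show ?thesis by (simp add: W_def a_def b_def)
qed

lemma eventually_optimal_scale_ge:
  fixes Ms \<alpha> A q r T :: real
  assumes Ms: "0 < Ms" and \<alpha>: "0 < \<alpha>" and A: "0 < A" and q: "0 < q" and r: "0 < r" and T: "0 < T"
  shows "\<forall>\<^sub>F M in at_left Ms. 0 < M \<and> M < Ms \<and> 0 < 1 - (M / Ms) powr \<alpha> \<and>
    T \<le> (q * A / (r * (1 - (M / Ms) powr \<alpha>))) powr (1 / (r + q))"
proof -
  define s where "s M = 1 - (M / Ms) powr \<alpha>" for M
  define s0 where "s0 = q * A / (r * T powr (r + q))"
  have s0: "s0 > 0" using q r A T by (simp add: s0_def)
  have "((\<lambda>M. 1 - (M / Ms) powr \<alpha>) \<longlongrightarrow> 1 - (Ms / Ms) powr \<alpha>) (at_left Ms)"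
    using Ms by (intro tendsto_intros) auto
  then have "(s \<longlongrightarrow> 0) (at_left Ms)"
    using Ms by (simp add: s_def[abs_def])
  then have "\<forall>\<^sub>F M in at_left Ms. s M < s0" using s0 by (rule order_tendstoD(2))
  moreover have "\<forall>\<^sub>F M in at_left Ms. 0 < M \<and> M < Ms"
    using eventually_at_left_real[OF Ms] by eventually_elim auto
  ultimately show ?thesis
  proof eventually_elim
    case (elim M)
    then have s_pos: "0 < s M"
      using Ms \<alpha> powr_less_mono2[of \<alpha> "M / Ms" 1] by (simp add: s_def)
    have "T powr (r + q) = q * A / (r * s0)"
      using q r A T by (simp add: s0_def field_simps)
    also have "\<dots> \<le> q * A / (r * s M)"
      using elim s_pos s0 q r A by (intro divide_left_mono mult_left_mono) auto
    finally have "(T powr (r + q)) powr (1 / (r + q)) \<le> (q * A / (r * s M)) powr (1 / (r + q))"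
      using q r T by (intro powr_mono2) auto
    with elim s_pos show ?case using q r T by (simp add: powr_powr s_def)
  qed
qed

lemma ex_vanishing_factor:
  fixes f :: "real \<Rightarrow> ereal" and g :: "real \<Rightarrow> real"
  assumes g_pos: "\<forall>\<^sub>F x in F. g x > 0"
    and bound: "\<And>\<eta>. \<eta> > 0 \<Longrightarrow> \<forall>\<^sub>F x in F. f x \<le> ereal ((1 + \<eta>) * g x)"
  shows "\<exists>\<epsilon>::real \<Rightarrow> real. (\<epsilon> \<longlongrightarrow> 0) F \<and> (\<forall>\<^sub>F x in F. f x \<le> ereal ((1 + \<epsilon> x) * g x))"
proof -
  define \<epsilon> where "\<epsilon> x = max 0 (real_of_ereal (f x) / g x - 1)" for x
  have key: "0 \<le> \<epsilon> x \<and> \<epsilon> x \<le> \<eta> \<and> f x \<le> ereal ((1 + \<epsilon> x) * g x)"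
    if gx: "g x > 0" and fx: "f x \<le> ereal ((1 + \<eta>) * g x)" and \<eta>: "\<eta> > 0" for x \<eta>
  proof (cases "f x")
    case (real v)
    have "v / g x \<le> 1 + \<epsilon> x" by (simp add: \<epsilon>_def real)
    then have "v \<le> (1 + \<epsilon> x) * g x" using gx by (simp add: field_simps)
    moreover have "v / g x - 1 \<le> \<eta>" using fx real gx by (simp add: field_simps)
    ultimately show ?thesis unfolding \<epsilon>_def using real \<eta> by simp
  qed (use fx \<eta> in \<open>auto simp: \<epsilon>_def\<close>)
  have "(\<epsilon> \<longlongrightarrow> 0) F"
  proof (rule tendstoI)
    fix e :: real assume e: "e > 0"
    have "\<forall>\<^sub>F x in F. f x \<le> ereal ((1 + e / 2) * g x)"
      using e by (intro bound) simp
    with g_pos show "\<forall>\<^sub>F x in F. dist (\<epsilon> x) 0 < e"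
    proof eventually_elim
      case (elim x)
      with key[of x "e / 2"] e show ?case by auto
    qed
  qed
  moreover have "\<forall>\<^sub>F x in F. f x \<le> ereal ((1 + \<epsilon> x) * g x)"
    using g_pos bound[OF zero_less_one]
  proof eventually_elim
    case (elim x)
    with key[of x 1] show ?case by auto
  qed
  ultimately show ?thesis by blast
qed

section \<open>Blow-up of the potential at a zero\<close>

locale potential_well =
  fixes V :: "'a::euclidean_space \<Rightarrow> real" and P0 :: 'a and a0 q d :: real
  assumes V_measurable: "V \<in> borel_measurable lborel"
    and V_nonneg: "\<And>x. 0 \<le> V x"
    and V_zero: "V P0 = 0"
    and q_pos: "0 < q" and a0_nonneg: "0 \<le> a0" and d_pos: "0 < d"
    and V_near_zero: "\<exists>K. \<forall>x. 0 < norm (x - P0) \<and> norm (x - P0) \<le> d \<longrightarrow>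
        \<bar>V x - a0 * norm (x - P0) powr q\<bar> \<le> K * norm (x - P0) powr (q + 1)"
    and V_exp_growth: "\<exists>C \<delta>. \<forall>x. V x \<le> C * exp (\<delta> * norm x)"
begin

lemma blowup_tendsto:
  "((\<lambda>\<tau>. \<tau> powr q * V (P0 + (1/\<tau>) *\<^sub>R u)) \<longlongrightarrow> a0 * norm u powr q) at_top"
proof (cases "u = 0")
  case True
  then show ?thesis using V_zero q_pos by simp
next
  case False
  obtain K where K: "\<And>x. 0 < norm (x - P0) \<Longrightarrow> norm (x - P0) \<le> d \<Longrightarrow>
      \<bar>V x - a0 * norm (x - P0) powr q\<bar> \<le> K * norm (x - P0) powr (q + 1)"
    using V_near_zero by blast
  have "\<forall>\<^sub>F \<tau> in at_top. norm (\<tau> powr q * V (P0 + (1/\<tau>) *\<^sub>R u) - a0 * norm u powr q)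
      \<le> K * norm u powr (q + 1) / \<tau>"
    using eventually_ge_at_top[of "max 1 (norm u / d)"]
  proof eventually_elim
    case (elim \<tau>)
    then have \<tau>: "\<tau> > 0" and small: "norm u / \<tau> \<le> d"
      using d_pos by (auto simp: field_simps)
    have scale: "a0 * norm u powr q = \<tau> powr q * (a0 * (norm u / \<tau>) powr q)"
      using \<tau> by (simp add: powr_divide)
    then have "norm (\<tau> powr q * V (P0 + (1/\<tau>) *\<^sub>R u) - a0 * norm u powr q)
        = \<tau> powr q * \<bar>V (P0 + (1/\<tau>) *\<^sub>R u) - a0 * (norm u / \<tau>) powr q\<bar>"
      by (subst scale) (simp add: abs_mult flip: right_diff_distrib)
    also have "\<dots> \<le> \<tau> powr q * (K * (norm u / \<tau>) powr (q + 1))"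
      using K[of "P0 + (1/\<tau>) *\<^sub>R u"] \<tau> small False by (intro mult_left_mono) auto
    also have "\<dots> = K * norm u powr (q + 1) / \<tau>"
      using \<tau> by (simp add: powr_divide powr_add field_simps)
    finally show ?case .
  qed
  moreover have "((\<lambda>\<tau>. K * norm u powr (q + 1) / \<tau>) \<longlongrightarrow> 0) at_top"
    by (intro tendsto_divide_0[OF tendsto_const] filterlim_at_top_imp_at_infinity[OF filterlim_ident])
  ultimately show ?thesis
    by (subst LIM_zero_iff[symmetric]) (rule Lim_null_comparison)
qed

lemma V_le_near_zero:
  "\<exists>K\<ge>0. \<forall>x. norm (x - P0) \<le> d \<longrightarrow> V x \<le> a0 * norm (x - P0) powr q + K * norm (x - P0) powr (q + 1)"
proof -
  obtain K where K: "\<And>x. 0 < norm (x - P0) \<Longrightarrow> norm (x - P0) \<le> d \<Longrightarrow>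
      \<bar>V x - a0 * norm (x - P0) powr q\<bar> \<le> K * norm (x - P0) powr (q + 1)"
    using V_near_zero by blast
  have "V x \<le> a0 * norm (x - P0) powr q + \<bar>K\<bar> * norm (x - P0) powr (q + 1)"
    if "norm (x - P0) \<le> d" for x
  proof (cases "x = P0")
    case False
    then have "V x - a0 * norm (x - P0) powr q \<le> K * norm (x - P0) powr (q + 1)"
      using K[of x] that by auto
    moreover have "K * norm (x - P0) powr (q + 1) \<le> \<bar>K\<bar> * norm (x - P0) powr (q + 1)"
      by (intro mult_right_mono) auto
    ultimately show ?thesis by linarith
  qed (simp add: V_zero)
  then show ?thesis by (intro exI[of _ "\<bar>K\<bar>"]) auto
qed

lemma V_le_exp: "\<exists>C \<delta>. 0 \<le> C \<and> 0 \<le> \<delta> \<and> (\<forall>x. V x \<le> C * exp (\<delta> * norm x))"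
proof -
  obtain C \<delta> where C: "\<And>x. V x \<le> C * exp (\<delta> * norm x)"
    using V_exp_growth by blast
  have "V x \<le> \<bar>C\<bar> * exp (max \<delta> 0 * norm x)" for x
  proof -
    have "C * exp (\<delta> * norm x) \<le> \<bar>C\<bar> * exp (max \<delta> 0 * norm x)"
      by (intro mult_mono) (auto intro: mult_right_mono)
    then show ?thesis using C[of x] by linarith
  qed
  then show ?thesis by (intro exI[of _ "\<bar>C\<bar>"] exI[of _ "max \<delta> 0"]) auto
qed

text \<open>Near \<open>P0\<close> the rescaled potential is controlled by the asymptotics, far from it by the
  exponential growth; the factor \<open>\<tau>\<^sup>q\<close> is absorbed by \<open>\<tau> \<le> \<bar>u\<bar>/d\<close> in the second regime.\<close>

lemma blowup_bound:
  "\<exists>L \<delta>. 0 \<le> L \<and> 0 \<le> \<delta> \<and> (\<forall>\<tau>\<ge>1. \<forall>u.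
     \<tau> powr q * V (P0 + (1/\<tau>) *\<^sub>R u) \<le> L * (norm u powr q + norm u powr (q + 1)) * exp (\<delta> / \<tau> * norm u))"
proof -
  obtain K where K: "0 \<le> K" and near: "\<And>x. norm (x - P0) \<le> d \<Longrightarrow>
      V x \<le> a0 * norm (x - P0) powr q + K * norm (x - P0) powr (q + 1)"
    using V_le_near_zero by blast
  obtain C \<delta> where C: "0 \<le> C" and \<delta>: "0 \<le> \<delta>" and far: "\<And>x. V x \<le> C * exp (\<delta> * norm x)"
    using V_le_exp by blast
  define B where "B = C * exp (\<delta> * norm P0) / d powr q"
  define L where "L = a0 + K + B"
  have B: "0 \<le> B" and L: "0 \<le> L" "a0 \<le> L" "K \<le> L" "B \<le> L"
    using a0_nonneg d_pos K C by (auto simp: B_def L_def)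
  have "\<tau> powr q * V (P0 + (1/\<tau>) *\<^sub>R u) \<le> L * (norm u powr q + norm u powr (q + 1)) * exp (\<delta> / \<tau> * norm u)"
    if \<tau>: "\<tau> \<ge> 1" for \<tau> u
  proof -
    define x where "x = P0 + (1/\<tau>) *\<^sub>R u"
    have \<tau>0: "\<tau> > 0" and dist: "norm (x - P0) = norm u / \<tau>" using \<tau> by (auto simp: x_def)
    have exp1: "1 \<le> exp (\<delta> / \<tau> * norm u)" using \<tau>0 \<delta> by simp
    show ?thesis
    proof (cases "norm u / \<tau> \<le> d")
      case True
      then have "\<tau> powr q * V x \<le> \<tau> powr q * (a0 * (norm u / \<tau>) powr q + K * (norm u / \<tau>) powr (q + 1))"
        using near[of x] dist by (intro mult_left_mono) auto
      also have "\<dots> = a0 * norm u powr q + K * norm u powr (q + 1) / \<tau>"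
        using \<tau>0 by (simp add: powr_divide powr_add field_simps)
      also have "\<dots> \<le> a0 * norm u powr q + K * norm u powr (q + 1)"
        using \<tau> K by (simp add: divide_le_eq mult_le_cancel_left1 mult_less_0_iff)
      also have "\<dots> \<le> L * (norm u powr q + norm u powr (q + 1))"
        using L by (simp add: distrib_left add_mono mult_right_mono)
      also have "\<dots> \<le> L * (norm u powr q + norm u powr (q + 1)) * exp (\<delta> / \<tau> * norm u)"
        using mult_left_mono[OF exp1, of "L * (norm u powr q + norm u powr (q + 1))"] L(1) by simp
      finally show ?thesis by (simp add: x_def)
    next
      case False
      have "\<tau> powr q \<le> (norm u / d) powr q"
        using False \<tau>0 q_pos d_pos by (intro powr_mono2) (auto simp: field_simps)
      moreover have "V x \<le> C * exp (\<delta> * norm P0) * exp (\<delta> / \<tau> * norm u)"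
      proof -
        have "norm x \<le> norm P0 + norm u / \<tau>"
          using norm_triangle_ineq[of P0 "(1/\<tau>) *\<^sub>R u"] \<tau>0 by (simp add: x_def)
        then have "\<delta> * norm x \<le> \<delta> * (norm P0 + norm u / \<tau>)"
          using \<delta> by (rule mult_left_mono)
        then have "exp (\<delta> * norm x) \<le> exp (\<delta> * norm P0 + \<delta> / \<tau> * norm u)"
          by (simp add: algebra_simps)
        then show ?thesis
          using far[of x] mult_left_mono[OF _ C] by (fastforce simp: exp_add mult.assoc)
      qed
      ultimately have "\<tau> powr q * V x \<le> (norm u / d) powr q * (C * exp (\<delta> * norm P0) * exp (\<delta> / \<tau> * norm u))"
        using V_nonneg by (intro mult_mono) auto
      also have "\<dots> = B * norm u powr q * exp (\<delta> / \<tau> * norm u)"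
        using d_pos by (simp add: B_def powr_divide)
      also have "\<dots> \<le> L * (norm u powr q + norm u powr (q + 1)) * exp (\<delta> / \<tau> * norm u)"
        using L B by (intro mult_right_mono mult_mono) auto
      finally show ?thesis by (simp add: x_def)
    qed
  qed
  then show ?thesis using L(1) \<delta> by blast
qed

end

locale well_profile = potential_well V P0 a0 q d
  for V :: "'a::euclidean_space \<Rightarrow> real" and P0 :: 'a and a0 q d :: real +
  fixes m0 :: "'a \<Rightarrow> real"
  assumes m0_integrable: "integrable lborel m0"
    and m0_nonneg: "\<And>x. 0 \<le> m0 x"
    and m0_exp_decay: "\<exists>C \<delta>1. 0 < \<delta>1 \<and> (\<forall>x. m0 x \<le> C * exp (- \<delta>1 * norm x))"
begin

lemma m0_bounded: "\<exists>B. \<forall>x. m0 x \<le> B"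
proof -
  obtain C \<delta>1 where \<delta>1: "0 < \<delta>1" and C: "\<And>x. m0 x \<le> C * exp (- \<delta>1 * norm x)"
    using m0_exp_decay by blast
  have "m0 x \<le> \<bar>C\<bar>" for x
  proof -
    have "m0 x \<le> \<bar>C\<bar> * exp (- \<delta>1 * norm x)"
      by (rule order_trans[OF C[of x]]) (intro mult_right_mono; simp)
    also have "\<dots> \<le> \<bar>C\<bar>"
      using \<delta>1 by (intro mult_left_le) auto
    finally show ?thesis .
  qed
  then show ?thesis by auto
qed

lemma measurable_blowup_integrand:
  "(\<lambda>z. V (P0 + (1/\<tau>) *\<^sub>R (z + y)) * m0 z) \<in> borel_measurable lborel"
proof -
  have "(\<lambda>z. V (P0 + (1/\<tau>) *\<^sub>R (z + y))) = (\<lambda>z. V ((P0 + (1/\<tau>) *\<^sub>R y) + (1/\<tau>) *\<^sub>R z))"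
    by (simp add: algebra_simps)
  then show ?thesis
    using measurable_affine_comp[OF V_measurable] m0_integrable by measurable
qed

text \<open>The exponential decay of \<open>m0\<close> beats both the polynomial growth of the rescaled potential
  near \<open>P0\<close> and, once \<open>\<tau> \<ge> 2\<delta>/\<delta>1\<close>, its exponential growth at infinity.\<close>

lemma blowup_dominated:
  "\<exists>G. integrable lborel G \<and>
     (\<forall>\<^sub>F \<tau> in at_top. \<forall>z. norm (\<tau> powr q * V (P0 + (1/\<tau>) *\<^sub>R (z + y)) * m0 z) \<le> G z)"
proof -
  obtain L \<delta> where L: "0 \<le> L" and \<delta>: "0 \<le> \<delta>" and bound: "\<And>\<tau> u. \<tau> \<ge> 1 \<Longrightarrow>
      \<tau> powr q * V (P0 + (1/\<tau>) *\<^sub>R u) \<le> L * (norm u powr q + norm u powr (q + 1)) * exp (\<delta> / \<tau> * norm u)"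
    using blowup_bound by blast
  obtain C \<delta>1 where \<delta>1: "0 < \<delta>1" and decay: "\<And>x. m0 x \<le> C * exp (- \<delta>1 * norm x)"
    using m0_exp_decay by blast
  have C: "0 \<le> C"
    using decay[of 0] m0_nonneg[of 0] by (simp add: zero_le_mult_iff)
  obtain K1 where K1: "\<And>u. u \<ge> 0 \<Longrightarrow> u powr q \<le> K1 * exp (\<delta>1 / 4 * u)"
    using powr_le_exp_bound[of q "\<delta>1 / 4"] q_pos \<delta>1 by auto
  obtain K2 where K2: "\<And>u. u \<ge> 0 \<Longrightarrow> u powr (q + 1) \<le> K2 * exp (\<delta>1 / 4 * u)"
    using powr_le_exp_bound[of "q + 1" "\<delta>1 / 4"] q_pos \<delta>1 by auto
  define G where "G z = L * (K1 + K2) * C * exp (3 * \<delta>1 / 4 * norm y) * exp (- (\<delta>1 / 4) * norm z)"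
    for z :: 'a
  have "integrable lborel G"
    unfolding G_def using \<delta>1 by (intro integrable_mult_right integrable_exp_minus_norm) simp
  moreover have "norm (\<tau> powr q * V (P0 + (1/\<tau>) *\<^sub>R (z + y)) * m0 z) \<le> G z"
    if \<tau>: "\<tau> \<ge> max 1 (2 * \<delta> / \<delta>1)" for \<tau> z
  proof -
    define \<rho> where "\<rho> = norm z + norm y"
    have u: "norm (z + y) \<le> \<rho>" unfolding \<rho>_def by (rule norm_triangle_ineq)
    have \<tau>\<delta>: "\<delta> / \<tau> \<le> \<delta>1 / 2" using \<tau> \<delta>1 by (simp add: field_simps)
    have "\<tau> powr q * V (P0 + (1/\<tau>) *\<^sub>R (z + y)) * m0 z
        \<le> (L * (norm (z + y) powr q + norm (z + y) powr (q + 1)) * exp (\<delta> / \<tau> * norm (z + y)))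
          * (C * exp (- \<delta>1 * norm z))"
      using \<tau> L by (intro mult_mono bound decay m0_nonneg) auto
    also have "\<dots> \<le> (L * (\<rho> powr q + \<rho> powr (q + 1)) * exp (\<delta>1 / 2 * \<rho>)) * (C * exp (- \<delta>1 * norm z))"
    proof -
      have "exp (\<delta> / \<tau> * norm (z + y)) \<le> exp (\<delta>1 / 2 * \<rho>)"
        using mult_mono[OF \<tau>\<delta> u] \<delta> \<tau> \<delta>1 by simp
      moreover have "norm (z + y) powr q \<le> \<rho> powr q" "norm (z + y) powr (q + 1) \<le> \<rho> powr (q + 1)"
        using u q_pos by (auto intro!: powr_mono2)
      ultimately show ?thesis
        using L C by (intro mult_right_mono mult_mono mult_left_mono add_mono) auto
    qed
    also have "\<dots> \<le> (L * ((K1 + K2) * exp (\<delta>1 / 4 * \<rho>)) * exp (\<delta>1 / 2 * \<rho>)) * (C * exp (- \<delta>1 * norm z))"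
      using K1[of \<rho>] K2[of \<rho>] L C by (intro mult_right_mono mult_left_mono) (auto simp: \<rho>_def algebra_simps)
    also have "\<dots> = G z"
      by (simp add: G_def \<rho>_def mult_ac flip: exp_add) (simp add: field_simps)
    finally show ?thesis
      using V_nonneg m0_nonneg by simp
  qed
  then have "\<forall>\<^sub>F \<tau> in at_top. \<forall>z. norm (\<tau> powr q * V (P0 + (1/\<tau>) *\<^sub>R (z + y)) * m0 z) \<le> G z"
    using eventually_ge_at_top[of "max 1 (2 * \<delta> / \<delta>1)"] by (auto elim!: eventually_mono)
  ultimately show ?thesis by blast
qed

lemma
  shows integrable_moment: "integrable lborel (\<lambda>z. a0 * norm (z + y) powr q * m0 z)"
    and blowup_integral_tendsto: "((\<lambda>\<tau>. \<integral>z. \<tau> powr q * V (P0 + (1/\<tau>) *\<^sub>R (z + y)) * m0 z \<partial>lborel)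
          \<longlongrightarrow> (\<integral>z. a0 * norm (z + y) powr q * m0 z \<partial>lborel)) at_top"
proof -
  define s where "s \<tau> z = \<tau> powr q * V (P0 + (1/\<tau>) *\<^sub>R (z + y)) * m0 z" for \<tau> z
  obtain G where G: "integrable lborel G" and bound: "\<forall>\<^sub>F \<tau> in at_top. \<forall>z. norm (s \<tau> z) \<le> G z"
    using blowup_dominated unfolding s_def by blast
  have meas: "(\<lambda>z. a0 * norm (z + y) powr q * m0 z) \<in> borel_measurable lborel"
    using m0_integrable by measurable
  have meas_s: "s \<tau> \<in> borel_measurable lborel" for \<tau>
    using measurable_blowup_integrand[of \<tau> y] by (simp add: s_def[abs_def] mult.assoc)
  have lim: "AE z in lborel. ((\<lambda>\<tau>. s \<tau> z) \<longlongrightarrow> a0 * norm (z + y) powr q * m0 z) at_top"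
    unfolding s_def by (intro AE_I2 tendsto_mult_right blowup_tendsto)
  have bound_AE: "\<forall>\<^sub>F \<tau> in at_top. AE z in lborel. norm (s \<tau> z) \<le> G z"
    using bound by eventually_elim auto
  show "integrable lborel (\<lambda>z. a0 * norm (z + y) powr q * m0 z)"
    by (rule integrable_dominated_convergence_at_top[OF meas meas_s G lim bound_AE])
  show "((\<lambda>\<tau>. \<integral>z. \<tau> powr q * V (P0 + (1/\<tau>) *\<^sub>R (z + y)) * m0 z \<partial>lborel)
          \<longlongrightarrow> (\<integral>z. a0 * norm (z + y) powr q * m0 z \<partial>lborel)) at_top"
    using integral_dominated_convergence_at_top[OF meas meas_s G lim bound_AE] by (simp add: s_def)
qed

lemma eventually_integrable_blowup:
  "\<forall>\<^sub>F \<tau> in at_top. integrable lborel (\<lambda>z. V (P0 + (1/\<tau>) *\<^sub>R (z + y)) * m0 z)"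
proof -
  obtain G where G: "integrable lborel G"
    and bound: "\<forall>\<^sub>F \<tau> in at_top. \<forall>z. norm (\<tau> powr q * V (P0 + (1/\<tau>) *\<^sub>R (z + y)) * m0 z) \<le> G z"
    using blowup_dominated by blast
  show ?thesis
    using bound eventually_ge_at_top[of 1]
  proof eventually_elim
    case (elim \<tau>)
    have "integrable lborel (\<lambda>z. \<tau> powr q * (V (P0 + (1/\<tau>) *\<^sub>R (z + y)) * m0 z))"
      using elim(1) measurable_blowup_integrand[of \<tau> y]
      by (intro Bochner_Integration.integrable_bound[OF G])
        (auto simp: mult.assoc intro!: AE_I2 order_trans[OF _ abs_ge_self])
    then show ?case
      using elim(2) by simp
  qed
qed

end

context well_profile
begin

text \<open>The trial state is \<open>m0\<close> of mass \<open>c = M/Ms\<close> concentrated at scale \<open>1/\<tau>\<close> near \<open>P0\<close>, with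
  \<open>\<tau>\<close> chosen optimally for the deficit \<open>s = 1 - c\<^sup>r\<^sup>/\<^sup>n\<close>; as \<open>M \<nearrow> Ms\<close> this \<open>\<tau>\<close> tends to
  infinity, so the blow-up limit of the potential energy applies.\<close>

lemma e_ground_eventually_le:
  fixes r' r CH qhat Ms A :: real and w0 :: "'a \<Rightarrow> 'a" and y :: 'a
  defines "r \<equiv> conj_exp r'"
  assumes wp: "weak_pair qhat m0 w0" and r': "r' > 1"
    and kinetic: "ereal (C_L r' CH) * enn2ereal (kin r m0 w0) = 1"
    and interaction: "ereal (real DIM('a) / (real DIM('a) + r))
      * enn2ereal (pot (1 + r / real DIM('a)) m0) = 1"
    and mass: "(\<integral>x. m0 x \<partial>lborel) = Ms" and Ms: "0 < Ms"
    and A: "(\<integral>z. a0 * norm (z + y) powr q * m0 z \<partial>lborel) < A"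
  shows "\<forall>\<^sub>F M in at_left Ms. e_ground r' CH qhat V M
    \<le> ereal (((q + r) / q) * (q * A / r) powr (r / (r + q))
        * (1 - (M / Ms) powr (r / real DIM('a))) powr (q / (r + q)))"
proof -
  have r: "r > 0" using r' by (simp add: r_def conj_exp_def)
  have "0 \<le> (\<integral>z. a0 * norm (z + y) powr q * m0 z \<partial>lborel)"
    using a0_nonneg m0_nonneg by (simp add: integral_nonneg)
  with A have A_pos: "A > 0" by linarith
  define s where "s M = 1 - (M / Ms) powr (r / real DIM('a))" for M
  define \<tau> where "\<tau> M = (q * A / (r * s M)) powr (1 / (r + q))" for M
  obtain N where N: "\<And>\<tau>. \<tau> \<ge> N \<Longrightarrow>
      (\<integral>z. \<tau> powr q * V (P0 + (1/\<tau>) *\<^sub>R (z + y)) * m0 z \<partial>lborel) < A \<and>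
      integrable lborel (\<lambda>z. V (P0 + (1/\<tau>) *\<^sub>R (z + y)) * m0 z)"
    using eventually_conj[OF order_tendstoD(2)[OF blowup_integral_tendsto A] eventually_integrable_blowup]
    unfolding eventually_at_top_linorder by blast
  have "\<forall>\<^sub>F M in at_left Ms. 0 < M \<and> M < Ms \<and> 0 < s M \<and> max N 1 \<le> \<tau> M"
    using eventually_optimal_scale_ge[OF Ms _ A_pos q_pos r, of "r / real DIM('a)" "max N 1"] r
    by (simp add: s_def \<tau>_def)
  then show ?thesis
  proof eventually_elim
    case (elim M)
    define c where "c = M / Ms"
    have c: "0 < c" "c \<le> 1" using elim Ms by (auto simp: c_def)
    have \<tau>: "\<tau> M > 0" "N \<le> \<tau> M" using elim by auto
    define I where "I = (\<integral>z. V (P0 + (1/\<tau> M) *\<^sub>R (z + y)) * m0 z \<partial>lborel)"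
    have I: "0 \<le> I" "\<tau> M powr q * I < A"
      using N[OF \<tau>(2)] V_nonneg m0_nonneg by (auto simp: I_def integral_nonneg mult.assoc)
    have arg: "(1 / \<tau> M) *\<^sub>R (z - (- (\<tau> M *\<^sub>R P0) - y)) = P0 + (1/\<tau> M) *\<^sub>R (z + y)" for z
      using \<tau> by (simp add: algebra_simps)
    have "e_ground r' CH qhat V M = e_ground r' CH qhat V (c * (\<integral>x. m0 x \<partial>lborel))"
      using Ms by (simp add: c_def mass)
    also have "\<dots> \<le> ereal (c * (s M * \<tau> M powr r + I))"
      using e_ground_le_trial_state[OF wp m0_nonneg V_measurable V_nonneg, where r'=r' and CH=CH, folded r_def,
          OF kinetic interaction c(1) \<tau>(1), of "- (\<tau> M *\<^sub>R P0) - y"] N[OF \<tau>(2)]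
      by (simp add: arg I_def s_def c_def)
    also have "\<dots> \<le> ereal (s M * \<tau> M powr r + A * \<tau> M powr (- q))"
    proof -
      have "I \<le> A * \<tau> M powr (- q)" using I \<tau> by (simp add: powr_minus field_simps)
      moreover have "0 \<le> s M * \<tau> M powr r + I" using elim I by simp
      ultimately show ?thesis
        using c mult_left_le_one_le[of "s M * \<tau> M powr r + I" c] by simp
    qed
    also have "\<dots> = ereal (((q + r) / q) * (q * A / r) powr (r / (r + q)) * s M powr (q / (r + q)))"
      using power_sum_at_optimal_scale[OF A_pos _ q_pos r] elim by (simp add: \<tau>_def)
    finally show ?case by (simp add: s_def)
  qed
qed

lemma e_ground_upper_bound:
  fixes r' r CH qhat Ms \<mu> :: real and w0 :: "'a \<Rightarrow> 'a"
  defines "r \<equiv> conj_exp r'"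
    and "\<mu> \<equiv> Inf (range (\<lambda>y. \<integral>x. a0 * norm (x + y) powr q * m0 x \<partial>lborel))"
  assumes wp: "weak_pair qhat m0 w0" and r': "r' > 1"
    and kinetic: "ereal (C_L r' CH) * enn2ereal (kin r m0 w0) = 1"
    and interaction: "ereal (real DIM('a) / (real DIM('a) + r))
      * enn2ereal (pot (1 + r / real DIM('a)) m0) = 1"
    and mass: "(\<integral>x. m0 x \<partial>lborel) = Ms" and Ms: "0 < Ms" and a0: "0 < a0"
  shows "\<exists>\<epsilon> :: real \<Rightarrow> real. (\<epsilon> \<longlongrightarrow> 0) (at_left Ms) \<and>
     (\<forall>\<^sub>F M in at_left Ms. e_ground r' CH qhat V M
        \<le> ereal ((1 + \<epsilon> M) * ((q + r) / q) * (q * \<mu> / r) powr (r / (r + q))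
            * (1 - (M / Ms) powr (r / real DIM('a))) powr (q / (r + q))))"
proof -
  define H where "H y = (\<integral>x. a0 * norm (x + y) powr q * m0 x \<partial>lborel)" for y
  define g where "g M = ((q + r) / q) * (q * \<mu> / r) powr (r / (r + q))
    * (1 - (M / Ms) powr (r / real DIM('a))) powr (q / (r + q))" for M
  have r: "r > 0" using r' by (simp add: r_def conj_exp_def)
  obtain B where "\<And>x. m0 x \<le> B" using m0_bounded by blast
  then obtain c where c: "c > 0" "\<And>y. c \<le> H y"
    using moment_bounded_below[OF m0_nonneg m0_integrable _ _ a0 q_pos integrable_moment] mass Ms
    unfolding H_def by blast
  have \<mu>_pos: "\<mu> > 0"
    using c cInf_greatest[of "range H" c] by (fastforce simp: \<mu>_def H_def[abs_def])
  have "\<forall>\<^sub>F M in at_left Ms. g M > 0"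
    using eventually_at_left_real[OF Ms]
  proof eventually_elim
    case (elim M)
    then have "(M / Ms) powr (r / real DIM('a)) < 1 powr (r / real DIM('a))"
      using Ms r by (intro powr_less_mono2) auto
    then show ?case using \<mu>_pos q_pos r by (simp add: g_def)
  qed
  moreover have "\<forall>\<^sub>F M in at_left Ms. e_ground r' CH qhat V M \<le> ereal ((1 + \<eta>) * g M)"
    if \<eta>: "\<eta> > 0" for \<eta>
  proof -
    define A where "A = \<mu> * (1 + \<eta>) powr ((r + q) / r)"
    have "A > \<mu>" using \<mu>_pos \<eta> r q_pos by (simp add: A_def)
    then obtain y where "H y < A"
      using cInf_lessD[of "range H" A] by (auto simp: \<mu>_def H_def[abs_def])
    moreover have "(q * A / r) powr (r / (r + q)) = (1 + \<eta>) * (q * \<mu> / r) powr (r / (r + q))"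
    proof -
      have A_eq: "q * A / r = (q * \<mu> / r) * (1 + \<eta>) powr ((r + q) / r)" by (simp add: A_def)
      have "(q * A / r) powr (r / (r + q))
          = (q * \<mu> / r) powr (r / (r + q)) * ((1 + \<eta>) powr ((r + q) / r)) powr (r / (r + q))"
        unfolding A_eq using \<mu>_pos r q_pos by (intro powr_mult)
      also have "((1 + \<eta>) powr ((r + q) / r)) powr (r / (r + q)) = 1 + \<eta>"
        using \<eta> r q_pos by (simp add: powr_powr)
      finally show ?thesis by simp
    qed
    ultimately show ?thesis
      using e_ground_eventually_le[OF wp r', of CH, folded r_def, OF kinetic interaction mass Ms, of y A]
      by (simp add: H_def g_def mult_ac)
  qed
  ultimately show ?thesis
    using ex_vanishing_factor[of g "at_left Ms" "e_ground r' CH qhat V"] by (simp add: g_def mult_ac)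
qed

end

theorem lemma6p1:
  fixes V :: "'a::euclidean_space \<Rightarrow> real"
    and r' CH qhat b C2 \<delta> d C \<delta>1 :: real
    and l :: nat and P :: "nat \<Rightarrow> 'a" and a qq :: "nat \<Rightarrow> real"
    and m0 :: "'a \<Rightarrow> real" and w0 :: "'a \<Rightarrow> 'a"
  defines "n \<equiv> DIM('a)"
    and "r \<equiv> conj_exp r'"
    and "Ms \<equiv> M_star r' CH qhat b TYPE('a)"
    and "q \<equiv> Max (qq ` {..<l})"
    and "Z \<equiv> {i. i < l \<and> qq i = Max (qq ` {..<l})}"
    and "H \<equiv> (\<lambda>i y. \<integral>x. a i * norm (x + y) powr qq i * m0 x \<partial>lborel)"
  assumes n2: "n \<ge> 2" and r'1: "r' > 1" and CH: "CH > 0" and b: "b > 0"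
    and qhat: "qhat_ok n r qhat"
    and V_nonneg: "\<forall>x. V x \<ge> 0"
    and V_meas: "V \<in> borel_measurable lborel"
    and C2: "C2 > 0" and \<delta>: "\<delta> > 0"
    and V_growth: "\<exists>R. \<forall>x. norm x \<ge> R \<longrightarrow> V x \<le> C2 * exp (\<delta> * norm x)"
    and V_locbdd: "\<forall>K. compact K \<longrightarrow> bounded (V ` K)"
    and l1: "l \<ge> 1" and P_inj: "inj_on P {..<l}"
    and V_zeros: "{x. V x = 0} = P ` {..<l}"
    and a_pos: "\<forall>i<l. a i > 0" and qq_pos: "\<forall>i<l. qq i > 0" and d: "d > 0"
    and V_asym: "\<exists>K. \<forall>i<l. \<forall>x. 0 < norm (x - P i) \<and> norm (x - P i) \<le> d \<longrightarrow>
                  \<bar>V x - a i * norm (x - P i) powr qq i\<bar> \<le> K * norm (x - P i) powr (qq i + 1)"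
    and min_adm: "(m0, w0) \<in> Gamma_adm qhat b"
    and minimizer: "\<forall>(m, w) \<in> (Gamma_adm qhat b :: (('a \<Rightarrow> real) \<times> ('a \<Rightarrow> 'a)) set). Gamma_fun r' CH m0 w0 \<le> Gamma_fun r' CH m w"
    and mass: "(\<integral>x. m0 x \<partial>lborel) = Ms"
    and norm1: "ereal (C_L r' CH) * enn2ereal (kin r m0 w0) = 1"
    and norm2: "ereal (real n / (real n + r)) * enn2ereal (pot (1 + r / real n) m0) = 1"
    and C: "C > 0" and \<delta>1: "\<delta>1 > 0"
    and decay: "\<forall>x. m0 x \<le> C * exp (- \<delta>1 * norm x)"
  shows "\<exists>\<epsilon> :: real \<Rightarrow> real. (\<epsilon> \<longlongrightarrow> 0) (at_left Ms) \<and>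
     (\<forall>\<^sub>F M in at_left Ms.
        e_ground r' CH qhat V M \<le>
          ereal ((1 + \<epsilon> M) * ((q + r) / q)
            * (q * Min ((\<lambda>i. Inf (range (H i))) ` Z) / r) powr (r / (r + q))
            * (1 - (M / Ms) powr (r / real n)) powr (q / (r + q))))"
proof -
  from min_adm have wp: "weak_pair qhat m0 w0" and m0_nonneg: "\<And>x. 0 \<le> m0 x"
    and m0_nonzero: "\<not> (AE x in lborel. m0 x = 0)"
    by (auto simp: Gamma_adm_def)
  have m0_int: "integrable lborel m0" using wp by (simp add: weak_pair_def)
  have "0 \<le> Ms" unfolding mass[symmetric] using m0_nonneg by (simp add: integral_nonneg)
  moreover have "Ms \<noteq> 0"
    using integral_nonneg_eq_0_iff_AE[OF m0_int] m0_nonneg m0_nonzero mass by auto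
  ultimately have Ms_pos: "0 < Ms" by simp
  have "Max (qq ` {..<l}) \<in> qq ` {..<l}" using l1 by (intro Max_in) (auto simp: lessThan_empty_iff)
  then have "Min ((\<lambda>i. Inf (range (H i))) ` Z) \<in> (\<lambda>i. Inf (range (H i))) ` Z"
    by (intro Min_in) (auto simp: Z_def)
  then obtain i where i: "i < l" "qq i = q" "Inf (range (H i)) = Min ((\<lambda>i. Inf (range (H i))) ` Z)"
    by (auto simp: Z_def q_def)
  have "well_profile V (P i) (a i) q d m0"
  proof
    show "\<exists>K. \<forall>x. 0 < norm (x - P i) \<and> norm (x - P i) \<le> d \<longrightarrow>
        \<bar>V x - a i * norm (x - P i) powr q\<bar> \<le> K * norm (x - P i) powr (q + 1)"
      using V_asym i by metis
    show "\<exists>C \<delta>. \<forall>x. V x \<le> C * exp (\<delta> * norm x)"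
      using V_growth V_locbdd C2 \<delta> by (metis exp_bound_of_locally_bounded less_imp_le)
  qed (use V_meas V_nonneg V_zeros i a_pos qq_pos d m0_int m0_nonneg decay \<delta>1 in auto)
  from well_profile.e_ground_upper_bound[OF this wp r'1 norm1[unfolded r_def] norm2[unfolded r_def n_def]
      mass Ms_pos a_pos[rule_format, OF i(1)]]
  show ?thesis
    using i by (simp add: H_def r_def n_def)
qed

end
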